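(* Let $\Gamma$ be an infinite connected subgraph of $\mathbb B$ with natural weights. There is a constant $c_1>0$ such that if $x\in\Gamma$, $r\ge1$, $\lambda\ge64$, and both $B(x,r)$ and $B(x,\lambda^{-5}r)$ are $\lambda$-good, then $$E^xd(x,Y_t)\ge c_1\lambda^{-12}t^{1/3}\quad\text{for }\frac{r^3}{\lambda^6}\le t\le\frac{r^3}{\lambda^5}.$$
   Context: $\mathbb B$ is the rooted tree in which every vertex has $n_0\ge2$ children. On $\Gamma$: $\mu_{xy}=1$ for adjacent $x,y$ and $0$ otherwise, $\mu_x$ the degree of $x$ in $\Gamma$, $\mu(A)=\sum_{x\in A}\mu_x$, $d$ the graph distance in $\Gamma$, $B(x,r)=\{y\in\Gamma:d(x,y)\le r\}$, $V(x,r)=\mu(B(x,r))$. $Y$ is the continuous-time simple random walk on $\Gamma$ (exponential mean-1 holding times, jumps to a uniform neighbour), $E^x$ its expectation started at $x$. $M(x,r)$ is the smallest $m$ such that there is $A=\{z_1,\dots,z_m\}\subset\Gamma$ with $d(x,z_i)\in[r/4,3r/4]$ for all $i$ such that every path in $\Gamma$ from $x$ to $\Gamma\setminus B(x,r)$ passes through $A$. The ball $B(x,s)$ is $\lambda$-good if: $x\in\Gamma$; $s^2\lambda^{-2}\le V(x,s)\le s^2\lambda$; $M(x,s)\le\lambda/64$; $V(x,s/\lambda)\ge s^2\lambda^{-4}$; $V(x,s/\lambda^2)\ge s^2\lambda^{-6}$. *)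

theory Defs
  imports Complex_Main "HOL-Library.Extended_Nat"
begin

text \<open>The rooted tree B: vertices are words over {0..<n0}; the children of u are u@[i].\<close>
definition tree_vertices :: "nat \<Rightarrow> nat list set" where
  "tree_vertices n0 = {w. \<forall>i\<in>set w. i < n0}"

definition tree_adj :: "nat \<Rightarrow> nat list \<Rightarrow> nat list \<Rightarrow> bool" where
  "tree_adj n0 u v \<longleftrightarrow> (\<exists>i<n0. v = u @ [i]) \<or> (\<exists>i<n0. u = v @ [i])"

definition subgraph_of_tree :: "nat \<Rightarrow> nat list set \<Rightarrow> (nat list \<Rightarrow> nat list \<Rightarrow> bool) \<Rightarrow> bool" where
  "subgraph_of_tree n0 V E \<longleftrightarrow> V \<subseteq> tree_vertices n0
     \<and> (\<forall>x y. E x y \<longrightarrow> x \<in> V \<and> y \<in> V \<and> tree_adj n0 x y)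
     \<and> (\<forall>x y. E x y \<longrightarrow> E y x)"

text \<open>mu_x = degree (natural weights)\<close>
definition deg :: "(nat list \<Rightarrow> nat list \<Rightarrow> bool) \<Rightarrow> nat list \<Rightarrow> nat" where
  "deg E x = card {y. E x y}"

inductive walk :: "(nat list \<Rightarrow> nat list \<Rightarrow> bool) \<Rightarrow> nat \<Rightarrow> nat list \<Rightarrow> nat list \<Rightarrow> bool"
  for E where
  walk0: "walk E 0 x x"
| walkS: "E x z \<Longrightarrow> walk E k z y \<Longrightarrow> walk E (Suc k) x y"

definition connected_graph :: "nat list set \<Rightarrow> (nat list \<Rightarrow> nat list \<Rightarrow> bool) \<Rightarrow> bool" where
  "connected_graph V E \<longleftrightarrow> (\<forall>x\<in>V. \<forall>y\<in>V. \<exists>k. walk E k x y)"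

definition gdist :: "(nat list \<Rightarrow> nat list \<Rightarrow> bool) \<Rightarrow> nat list \<Rightarrow> nat list \<Rightarrow> nat" where
  "gdist E x y = (LEAST k. walk E k x y)"

definition ball :: "nat list set \<Rightarrow> (nat list \<Rightarrow> nat list \<Rightarrow> bool) \<Rightarrow> nat list \<Rightarrow> real \<Rightarrow> nat list set" where
  "ball V E x r = {y \<in> V. real (gdist E x y) \<le> r}"

definition vol :: "nat list set \<Rightarrow> (nat list \<Rightarrow> nat list \<Rightarrow> bool) \<Rightarrow> nat list \<Rightarrow> real \<Rightarrow> real" where
  "vol V E x r = (\<Sum>y\<in>ball V E x r. real (deg E y))"

definition is_path :: "(nat list \<Rightarrow> nat list \<Rightarrow> bool) \<Rightarrow> nat list list \<Rightarrow> bool" where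
  "is_path E p \<longleftrightarrow> p \<noteq> [] \<and> (\<forall>i. Suc i < length p \<longrightarrow> E (p ! i) (p ! Suc i))"

definition separates :: "nat list set \<Rightarrow> (nat list \<Rightarrow> nat list \<Rightarrow> bool) \<Rightarrow> nat list \<Rightarrow> real \<Rightarrow> nat list set \<Rightarrow> bool" where
  "separates V E x r A \<longleftrightarrow>
     (\<forall>p. is_path E p \<and> hd p = x \<and> last p \<in> V - ball V E x r \<longrightarrow> set p \<inter> A \<noteq> {})"

text \<open>M(x,r), with inf of the empty set = infinity\<close>
definition Mcut :: "nat list set \<Rightarrow> (nat list \<Rightarrow> nat list \<Rightarrow> bool) \<Rightarrow> nat list \<Rightarrow> real \<Rightarrow> enat" where
  "Mcut V E x r = Inf {enat (card A) | A. finite A \<and> A \<subseteq> V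
       \<and> (\<forall>z\<in>A. r / 4 \<le> real (gdist E x z) \<and> real (gdist E x z) \<le> 3 * r / 4)
       \<and> separates V E x r A}"

definition good_ball :: "nat list set \<Rightarrow> (nat list \<Rightarrow> nat list \<Rightarrow> bool) \<Rightarrow> nat list \<Rightarrow> real \<Rightarrow> real \<Rightarrow> bool" where
  "good_ball V E x s lam \<longleftrightarrow> x \<in> V
     \<and> s^2 / lam^2 \<le> vol V E x s \<and> vol V E x s \<le> s^2 * lam
     \<and> Mcut V E x s \<noteq> \<infinity> \<and> real (the_enat (Mcut V E x s)) \<le> lam / 64
     \<and> vol V E x (s / lam) \<ge> s^2 / lam^4
     \<and> vol V E x (s / lam^2) \<ge> s^2 / lam^6"

text \<open>n-step transition probabilities P^n(x,y) of the discrete-time simple random walk,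
  P(z,y) = mu_zy / mu_z.\<close>
fun pn :: "(nat list \<Rightarrow> nat list \<Rightarrow> bool) \<Rightarrow> nat \<Rightarrow> nat list \<Rightarrow> nat list \<Rightarrow> real" where
  "pn E 0 x y = (if y = x then 1 else 0)"
| "pn E (Suc n) x y = (\<Sum>z\<in>{z. E z y}. pn E n x z / real (deg E z))"

text \<open>E^x d(x,Y_t) for the continuous-time SRW with mean-1 exponential holding times:
  Y_t = X_{N_t} with N_t Poisson(t) independent of the discrete walk X.\<close>
definition exp_dist :: "nat list set \<Rightarrow> (nat list \<Rightarrow> nat list \<Rightarrow> bool) \<Rightarrow> nat list \<Rightarrow> real \<Rightarrow> real" where
  "exp_dist V E x t = (\<Sum>n. exp (- t) * t ^ n / fact n *
       (\<Sum>y\<in>ball V E x (real n). pn E n x y * real (gdist E x y)))"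

end

theory Submission
  imports Defs "HOL-Analysis.Convex"
begin

text \<open>
  Let q_n(x,y) = p_n(x,y)/\<mu>_y be the heat kernel of the discrete walk and h_n = q_n + q_(n+1);
  averaging two consecutive times removes the parity obstruction of bipartite graphs such as
  trees. The Dirichlet energy of h_n(x,-) is 2 (h_2n(x,x) - h_(2n+2)(x,x)), so the return
  densities D_j = h_2j(x,x) decrease. Some y in B(x,\<rho>) has h_2j(x,y) \<le> 2/V(x,\<rho>), and
  Cauchy-Schwarz along a geodesic from x to y gives D_j \<le> 2/V(x,\<rho>) + sqrt(2\<rho>(D_2j - D_(2j+1))).
  Choosing j in [m,2m) with a small decrement yields D_n \<le> 4/V(x,\<rho>) + 8\<rho>/m for n \<ge> 2m.
  By Cauchy-Schwarz again P^x(X_n \<in> B(x,R))^2 \<le> V(x,R) D_n; once this is at most 1/4 the walk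
  is at distance at least R with probability 1/2, and averaging over the Poisson number of jumps
  gives E^x d(x,Y_t) \<ge> R/4. With R = r/\<lambda>^5, \<rho> = r/\<lambda>^2 and m \<approx> r^3/\<lambda>^9 the volume bounds of
  the two good balls make this work for t \<ge> r^3/\<lambda>^6, and R \<ge> t^(1/3)/\<lambda>^12.
\<close>

lemma square_add_le_Suc_mult:
  fixes e s S k :: real
  assumes "k \<ge> 0" "S \<ge> 0" "s^2 \<le> k * S"
  shows "(e + s)^2 \<le> (k + 1) * (e^2 + S)"
proof (cases "k = 0")
  case True
  then show ?thesis using assms by simp
next
  case False
  then have k: "k > 0" using assms by simp
  have "2 * e * s * k \<le> k^2 * e^2 + s^2"
    using zero_le_power2[of "k * e - s"] by (simp add: power2_eq_square algebra_simps)
  then have "2 * e * s \<le> k * e^2 + s^2 / k"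
    using k by (simp add: field_simps power2_eq_square)
  moreover have "s^2 / k \<le> S" using assms k by (simp add: field_simps)
  ultimately show ?thesis using assms by (simp add: power2_eq_square algebra_simps)
qed

lemma telescope_square_le:
  fixes h :: "'a \<Rightarrow> real"
  assumes "distinct p" "p \<noteq> []"
  shows "(h (hd p) - h (last p))^2
           \<le> real (length p - 1) * (\<Sum>e\<in>set (zip p (tl p)). (h (fst e) - h (snd e))^2)"
  using assms
proof (induction p rule: induct_list012)
  case (3 a b r)
  define S where "S = (\<Sum>e\<in>set (zip (b # r) r). (h (fst e) - h (snd e))^2)"
  have IH: "(h b - h (last (b # r)))^2 \<le> real (length r) * S"
    using 3 unfolding S_def by simp
  have "(a, b) \<notin> set (zip (b # r) r)"
    using "3.prems" by (auto dest: set_zip_leftD)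
  then have edges: "(\<Sum>e\<in>set (zip (a # b # r) (b # r)). (h (fst e) - h (snd e))^2) = (h a - h b)^2 + S"
    unfolding S_def by simp
  have "S \<ge> 0" unfolding S_def by (intro sum_nonneg) simp
  then have "(h a - h b + (h b - h (last (b # r))))^2 \<le> (real (length r) + 1) * ((h a - h b)^2 + S)"
    using IH by (intro square_add_le_Suc_mult) auto
  then show ?case using edges by (simp add: add.commute)
qed simp_all

lemma le_of_le_add_sqrt:
  fixes b A K :: real
  assumes "b \<ge> 0" "A \<ge> 0" "K \<ge> 0" and le: "b \<le> A + sqrt (K * b)"
  shows "b \<le> 2 * A + 4 * K"
proof (cases "b \<le> 2 * A")
  case False
  then have b: "b > 0" using assms by simp
  have "(b / 2)^2 < (sqrt (K * b))^2"
    using False le b by (intro power_strict_mono) auto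
  also have "\<dots> = K * b" using assms by simp
  finally have "b * b < 4 * K * b" by (simp add: power2_eq_square field_simps)
  then show ?thesis using b assms by simp
qed (use assms in simp)

lemma exists_decrement_le:
  fixes f :: "nat \<Rightarrow> real"
  assumes dec: "\<And>n. f (Suc n) \<le> f n" and nonneg: "\<And>n. f n \<ge> 0" and m: "m \<ge> 1"
  shows "\<exists>j\<in>{m..<2 * m}. f (2 * j) - f (2 * j + 1) \<le> f (2 * m) / real m"
proof (rule ccontr)
  assume "\<not> ?thesis"
  then have "f (2 * m) / real m < f (2 * j) - f (2 * j + 1)" if "j \<in> {m..<2 * m}" for j
    using that by (meson not_le)
  then have "(\<Sum>j\<in>{m..<2 * m}. f (2 * m) / real m) < (\<Sum>j\<in>{m..<2 * m}. f (2 * j) - f (2 * j + 1))"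
    using m by (intro sum_strict_mono) auto
  also have "\<dots> \<le> (\<Sum>j\<in>{m..<2 * m}. f (2 * j) - f (2 * Suc j))"
    using dec by (intro sum_mono) simp
  also have "\<dots> = f (2 * m) - f (2 * (2 * m))"
    using sum_Suc_diff'[of m "2 * m" "\<lambda>j. - f (2 * j)"] by simp
  also have "\<dots> \<le> f (2 * m)" using nonneg by simp
  finally show False using m by simp
qed

lemma le_nat_ceiling: "real k \<le> r \<Longrightarrow> k \<le> nat \<lceil>r\<rceil>"
  by linarith

lemma cube_root_div_le:
  fixes r lam t :: real
  assumes "r > 0" "lam \<ge> 1" "0 \<le> t" "t \<le> r^3 / lam^5"
  shows "t powr (1 / 3) / lam^12 \<le> r / lam^5"
proof -
  have "r^3 / lam^5 \<le> r^3 / 1"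
    using assms by (intro divide_left_mono) auto
  then have "t \<le> r^3" using assms by simp
  then have "t powr (1 / 3) \<le> (r^3) powr (1 / 3)" using assms by (intro powr_mono2) auto
  also have "\<dots> = r powr (3 * (1 / 3))"
    using assms by (simp add: powr_powr flip: powr_numeral)
  also have "\<dots> = r" using assms by simp
  finally have "t powr (1 / 3) / lam^12 \<le> r / lam^12" using assms by (simp add: divide_right_mono)
  also have "\<dots> \<le> r / lam^5" using assms by (intro divide_left_mono power_increasing) auto
  finally show ?thesis .
qed

definition poisson :: "real \<Rightarrow> nat \<Rightarrow> real" where
  "poisson t n = exp (- t) * t ^ n / fact n"

lemma poisson_nonneg: "t \<ge> 0 \<Longrightarrow> poisson t n \<ge> 0"
  unfolding poisson_def by simp

lemma exp_series_sums: "(\<lambda>n. t ^ n / fact n) sums exp (t :: real)"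
  using exp_converges[of t] by (simp add: divide_inverse_commute)

lemma poisson_sums: "poisson t sums 1"
proof -
  have "(\<lambda>n. exp (- t) * (t ^ n / fact n)) sums (exp (- t) * exp t)"
    by (intro sums_mult exp_series_sums)
  moreover have "(\<lambda>n. exp (- t) * (t ^ n / fact n)) = poisson t"
    by (simp add: poisson_def fun_eq_iff)
  moreover have "exp (- t) * exp t = 1"
    by (simp add: exp_minus_inverse mult.commute)
  ultimately show ?thesis by simp
qed

lemma sum_exp_series_lessThan_le:
  fixes t :: real
  assumes "t \<ge> 0"
  shows "(\<Sum>n<k. t ^ n / fact n) \<le> 2 ^ k * exp (t / 2)"
proof -
  have "(\<Sum>n<k. t ^ n / fact n) \<le> (\<Sum>n<k. 2 ^ k * ((t / 2) ^ n / fact n))"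
  proof (intro sum_mono)
    fix n assume "n \<in> {..<k}"
    then have "(2::real) ^ n \<le> 2 ^ k" by (intro power_increasing) auto
    then have "2 ^ n * (t / 2) ^ n \<le> 2 ^ k * (t / 2) ^ n"
      using assms by (intro mult_right_mono) auto
    then show "t ^ n / fact n \<le> 2 ^ k * ((t / 2) ^ n / fact n)"
      by (simp add: divide_right_mono flip: power_mult_distrib)
  qed
  also have "\<dots> = 2 ^ k * (\<Sum>n<k. (t / 2) ^ n / fact n)"
    by (simp add: sum_distrib_left)
  also have "(\<Sum>n<k. (t / 2) ^ n / fact n) \<le> (\<Sum>n. (t / 2) ^ n / fact n)"
    using exp_series_sums[of "t / 2"] assms by (intro sum_le_suminf) (auto simp: sums_summable)
  also have "\<dots> = exp (t / 2)"
    using exp_series_sums[of "t / 2"] by (rule sums_unique[symmetric])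
  finally show ?thesis by (simp add: mult_left_mono)
qed

lemma sum_poisson_lessThan_le_half:
  assumes t: "t \<ge> 2 * (real k + 1)"
  shows "(\<Sum>n<k. poisson t n) \<le> 1 / 2"
proof -
  have "(\<Sum>n<k. poisson t n) = exp (- t) * (\<Sum>n<k. t ^ n / fact n)"
    by (simp add: poisson_def sum_distrib_left)
  also have "\<dots> \<le> exp (- t) * (2 ^ k * exp (t / 2))"
    using t by (intro mult_left_mono sum_exp_series_lessThan_le) auto
  also have "\<dots> = 2 ^ k / exp (t / 2)"
    by (simp add: field_simps flip: exp_add)
  also have "\<dots> \<le> 1 / 2"
  proof -
    have "(2::real) ^ Suc k \<le> exp 1 ^ Suc k"
      using exp_ge_add_one_self[of 1] by (intro power_mono) auto
    also have "\<dots> = exp (real (Suc k))"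
      by (metis exp_of_nat_mult mult.right_neutral)
    also have "\<dots> \<le> exp (t / 2)"
      using t by simp
    finally show ?thesis by (simp add: field_simps)
  qed
  finally show ?thesis .
qed

lemma summable_poisson_mult:
  assumes "t \<ge> 0" and "\<And>n. 0 \<le> f n" and "\<And>n. f n \<le> real n"
  shows "summable (\<lambda>n. poisson t n * f n)"
proof (rule summable_comparison_test)
  show "\<exists>N. \<forall>n\<ge>N. norm (poisson t n * f n) \<le> exp (- t) * ((2 * t) ^ n / fact n)"
  proof (intro exI allI impI)
    fix n :: nat
    have "f n \<le> 2 ^ n"
      using assms(3)[of n] of_nat_less_two_power[of n, where 'a=real] by linarith
    then have "norm (poisson t n * f n) \<le> poisson t n * 2 ^ n"
      using assms(2)[of n] poisson_nonneg[OF assms(1), of n] by (simp add: mult_left_mono)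
    also have "\<dots> = exp (- t) * ((2 * t) ^ n / fact n)"
      by (simp add: poisson_def power_mult_distrib)
    finally show "norm (poisson t n * f n) \<le> exp (- t) * ((2 * t) ^ n / fact n)" .
  qed
  show "summable (\<lambda>n. exp (- t) * ((2 * t) ^ n / fact n))"
    by (intro summable_mult sums_summable[OF exp_series_sums])
qed

section \<open>Walks, paths and reachable sets\<close>

lemma walk_snoc: "walk E k a b \<Longrightarrow> E b c \<Longrightarrow> walk E (Suc k) a c"
  by (induction rule: walk.induct) (auto intro: walk.intros)

lemma is_path_singleton [simp]: "is_path E [a]"
  by (simp add: is_path_def)

lemma is_path_Cons_Cons [simp]: "is_path E (a # b # p) \<longleftrightarrow> E a b \<and> is_path E (b # p)"
proof
  assume path: "is_path E (a # b # p)"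
  have "E ((a # b # p) ! Suc i) ((a # b # p) ! Suc (Suc i))" if "Suc i < length (b # p)" for i
    using path that unfolding is_path_def by (metis length_Cons Suc_less_eq)
  then show "E a b \<and> is_path E (b # p)"
    using path unfolding is_path_def by auto
next
  assume "E a b \<and> is_path E (b # p)"
  then show "is_path E (a # b # p)"
    unfolding is_path_def by (auto simp: less_Suc_eq_0_disj)
qed

lemma is_path_appendD: "is_path E (us @ vs) \<Longrightarrow> vs \<noteq> [] \<Longrightarrow> is_path E vs"
proof (induction us)
  case (Cons u us)
  then show ?case by (cases "us @ vs") auto
qed simp

lemma is_path_edge: "is_path E p \<Longrightarrow> e \<in> set (zip p (tl p)) \<Longrightarrow> E (fst e) (snd e)"
  by (induction p rule: induct_list012) auto

declare pn.simps(2) [simp del]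

lemma pn_nonneg: "pn E n x y \<ge> 0"
  by (induction n arbitrary: y) (auto simp: pn.simps intro!: sum_nonneg)

lemma walk_of_pn_nonzero: "pn E n x y \<noteq> 0 \<Longrightarrow> walk E n x y"
proof (induction n arbitrary: y)
  case (Suc n)
  then obtain z where "E z y" "pn E n x z \<noteq> 0"
    by (auto simp: pn.simps elim: sum.not_neutral_contains_not_neutral)
  then show ?case using Suc.IH walk_snoc by blast
qed (auto split: if_splits intro: walk.intros)

lemma gdist_le_walk: "walk E k x y \<Longrightarrow> gdist E x y \<le> k"
  unfolding gdist_def by (rule Least_le)

locale connected_locally_finite_graph =
  fixes V :: "nat list set" and E :: "nat list \<Rightarrow> nat list \<Rightarrow> bool"
  assumes edge_sym: "E x y \<Longrightarrow> E y x"
    and edge_in_V: "E x y \<Longrightarrow> x \<in> V"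
    and finite_neighbours: "finite {y. E x y}"
    and neighbour_exists: "x \<in> V \<Longrightarrow> \<exists>y. E x y"
    and connected: "connected_graph V E"
begin

lemma in_neighbours_sym: "{z. E z y} = {z. E y z}"
  using edge_sym by blast

lemma finite_in_neighbours: "finite {z. E z y}"
  using finite_neighbours[of y] by (simp add: in_neighbours_sym)

lemma deg_pos: "x \<in> V \<Longrightarrow> deg E x > 0"
  unfolding deg_def using neighbour_exists finite_neighbours by (auto simp: card_gt_0_iff)

lemma walk_in_V: "walk E k a b \<Longrightarrow> a \<in> V \<Longrightarrow> b \<in> V"
  by (induction rule: walk.induct) (auto intro: edge_in_V edge_sym)

lemma walk_gdist: "x \<in> V \<Longrightarrow> y \<in> V \<Longrightarrow> walk E (gdist E x y) x y"
  using connected unfolding gdist_def connected_graph_def by (meson LeastI_ex)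

definition reach :: "nat list \<Rightarrow> nat \<Rightarrow> nat list set" where
  "reach x L = {y. \<exists>j\<le>L. walk E j x y}"

lemma self_in_reach: "x \<in> reach x L"
  unfolding reach_def by (auto intro: walk.intros)

lemma reach_mono: "L \<le> L' \<Longrightarrow> reach x L \<subseteq> reach x L'"
  unfolding reach_def by (blast intro: le_trans)

lemma reach_edge: "y \<in> reach x L \<Longrightarrow> E y z \<Longrightarrow> z \<in> reach x (Suc L)"
  unfolding reach_def using walk_snoc by fastforce

lemma reach_Suc_subset: "reach x (Suc L) \<subseteq> insert x (\<Union>z\<in>{z. E x z}. reach z L)"
proof
  fix y assume "y \<in> reach x (Suc L)"
  then obtain j where "walk E j x y" "j \<le> Suc L" unfolding reach_def by blast
  then show "y \<in> insert x (\<Union>z\<in>{z. E x z}. reach z L)"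
    by (cases rule: walk.cases) (auto simp: reach_def)
qed

lemma finite_reach: "finite (reach x L)"
proof (induction L arbitrary: x)
  case 0
  have "reach x 0 = {x}" unfolding reach_def by (auto elim: walk.cases intro: walk.intros)
  then show ?case by simp
next
  case (Suc L)
  then show ?case
    using finite_neighbours by (intro finite_subset[OF reach_Suc_subset]) auto
qed

lemma reach_subset_V: "x \<in> V \<Longrightarrow> reach x L \<subseteq> V"
  unfolding reach_def using walk_in_V by blast

lemma pn_in_reach: "pn E n x y \<noteq> 0 \<Longrightarrow> y \<in> reach x n"
  unfolding reach_def using walk_of_pn_nonzero by blast

lemma walk_imp_distinct_path:
  "walk E k x y \<Longrightarrow> \<exists>p. is_path E p \<and> distinct p \<and> hd p = x \<and> last p = y
     \<and> length p \<le> Suc k \<and> set p \<subseteq> reach x k"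
proof (induction rule: walk.induct)
  case (walk0 x)
  show ?case by (rule exI[of _ "[x]"]) (auto simp: self_in_reach)
next
  case (walkS x z k y)
  then obtain p where p: "is_path E p" "distinct p" "hd p = z" "last p = y" "length p \<le> Suc k"
    "set p \<subseteq> reach z k"
    by blast
  have "reach z k \<subseteq> reach x (Suc k)"
    unfolding reach_def using walkS.hyps(1) by (auto intro: walk.intros)
  then have p_reach: "set p \<subseteq> reach x (Suc k)" using p(6) by blast
  show ?case
  proof (cases "x \<in> set p")
    case True
    \<comment> \<open>cut the cycle through x\<close>
    then obtain us vs where uv: "p = us @ x # vs" by (meson split_list)
    then show ?thesis
      using p p_reach is_path_appendD[of E us "x # vs"] by (intro exI[of _ "x # vs"]) auto
  next
    case False
    then obtain r where "p = z # r" using p(1,3) unfolding is_path_def by (cases p) auto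
    then show ?thesis
      using p p_reach False walkS.hyps(1) self_in_reach by (intro exI[of _ "x # p"]) auto
  qed
qed

lemma sum_edges_swap:
  fixes h k :: "nat list \<Rightarrow> real"
  assumes F: "finite F" and h: "\<And>y. h y \<noteq> 0 \<Longrightarrow> y \<in> F" and k: "\<And>z. k z \<noteq> 0 \<Longrightarrow> z \<in> F"
  shows "(\<Sum>y\<in>F. h y * (\<Sum>z\<in>{z. E z y}. k z)) = (\<Sum>z\<in>F. k z * (\<Sum>y\<in>{y. E z y}. h y))"
proof -
  have "(\<Sum>y\<in>F. h y * (\<Sum>z\<in>{z. E z y}. k z)) = (\<Sum>y\<in>F. \<Sum>z\<in>{z. z \<in> F \<and> E z y}. h y * k z)"
  proof (rule sum.cong[OF refl])
    fix y
    have "h y * (\<Sum>z\<in>{z. E z y}. k z) = (\<Sum>z\<in>{z. E z y}. h y * k z)"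
      by (rule sum_distrib_left)
    also have "\<dots> = (\<Sum>z\<in>{z. z \<in> F \<and> E z y}. h y * k z)"
      using finite_in_neighbours[of y] k by (intro sum.mono_neutral_right) auto
    finally show "h y * (\<Sum>z\<in>{z. E z y}. k z) = (\<Sum>z\<in>{z. z \<in> F \<and> E z y}. h y * k z)" .
  qed
  also have "\<dots> = (\<Sum>z\<in>F. \<Sum>y\<in>{y. y \<in> F \<and> E z y}. h y * k z)"
    by (rule sum.swap_restrict[OF F F])
  also have "\<dots> = (\<Sum>z\<in>F. k z * (\<Sum>y\<in>{y. E z y}. h y))"
  proof (rule sum.cong[OF refl])
    fix z
    have "(\<Sum>y\<in>{y. y \<in> F \<and> E z y}. h y * k z) = (\<Sum>y\<in>{y. E z y}. h y * k z)"
      using finite_neighbours[of z] h by (intro sum.mono_neutral_left) auto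
    then show "(\<Sum>y\<in>{y. y \<in> F \<and> E z y}. h y * k z) = k z * (\<Sum>y\<in>{y. E z y}. h y)"
      by (simp add: sum_distrib_left mult.commute)
  qed
  finally show ?thesis .
qed

lemma sum_edges_target:
  fixes g :: "nat list \<Rightarrow> real"
  assumes F: "finite F" and g: "\<And>z. g z \<noteq> 0 \<Longrightarrow> z \<in> F \<and> {y. E z y} \<subseteq> F"
  shows "(\<Sum>y\<in>F. \<Sum>z\<in>{z. E z y}. g z) = (\<Sum>z\<in>F. real (deg E z) * g z)"
proof -
  have "(\<Sum>y\<in>F. \<Sum>z\<in>{z. E z y}. g z) = (\<Sum>y\<in>F. of_bool (y \<in> F) * (\<Sum>z\<in>{z. E z y}. g z))"
    by simp
  also have "\<dots> = (\<Sum>z\<in>F. g z * (\<Sum>y\<in>{y. E z y}. of_bool (y \<in> F)))"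
    using F g by (intro sum_edges_swap) auto
  also have "\<dots> = (\<Sum>z\<in>F. real (deg E z) * g z)"
  proof (rule sum.cong[OF refl])
    fix z
    show "g z * (\<Sum>y\<in>{y. E z y}. of_bool (y \<in> F)) = real (deg E z) * g z"
    proof (cases "g z = 0")
      case False
      then have "(\<Sum>y\<in>{y. E z y}. of_bool (y \<in> F)) = (\<Sum>y\<in>{y. E z y}. (1::real))"
        using g[of z] by (intro sum.cong) auto
      then show ?thesis by (simp add: deg_def)
    qed simp
  qed
  finally show ?thesis .
qed

lemma sum_pn_reach:
  assumes x: "x \<in> V"
  shows "n \<le> L \<Longrightarrow> (\<Sum>y\<in>reach x L. pn E n x y) = 1"
proof (induction n)
  case 0
  then show ?case using self_in_reach finite_reach by simp
next
  case (Suc n)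
  have "(\<Sum>y\<in>reach x L. pn E (Suc n) x y)
      = (\<Sum>z\<in>reach x L. real (deg E z) * (pn E n x z / real (deg E z)))"
  proof (simp only: pn.simps, rule sum_edges_target[OF finite_reach])
    fix z assume "pn E n x z / real (deg E z) \<noteq> 0"
    then have "z \<in> reach x n" using pn_in_reach by fastforce
    then show "z \<in> reach x L \<and> {y. E z y} \<subseteq> reach x L"
      using reach_edge reach_mono[of n L] reach_mono[of "Suc n" L] Suc.prems by fastforce
  qed
  also have "\<dots> = (\<Sum>z\<in>reach x L. pn E n x z)"
    using reach_subset_V[OF x] deg_pos by (intro sum.cong) (auto simp: subset_iff)
  finally show ?case using Suc by simp
qed

section \<open>Heat kernel and Dirichlet energy\<close>

text \<open>hk, hk2 and diag are the q_n, h_n and D_j of the sketch above.\<close>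

definition hk :: "nat \<Rightarrow> nat list \<Rightarrow> nat list \<Rightarrow> real" where
  "hk n x y = pn E n x y / real (deg E y)"

lemma hk_nonneg: "hk n x y \<ge> 0"
  unfolding hk_def using pn_nonneg by simp

lemma sum_pn_mult_hk:
  "a + b \<le> L \<Longrightarrow> (\<Sum>y\<in>reach x L. pn E a x y * hk b x y) = hk (a + b) x x"
proof (induction a arbitrary: b)
  case 0
  have "(\<Sum>y\<in>reach x L. pn E 0 x y * hk b x y) = (\<Sum>y\<in>reach x L. if y = x then hk b x y else 0)"
    by (rule sum.cong) auto
  then show ?case using self_in_reach finite_reach by simp
next
  case (Suc a)
  have "(\<Sum>y\<in>reach x L. pn E (Suc a) x y * hk b x y)
      = (\<Sum>y\<in>reach x L. hk b x y * (\<Sum>z\<in>{z. E z y}. hk a x z))"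
    by (simp add: hk_def pn.simps mult.commute)
  also have "\<dots> = (\<Sum>z\<in>reach x L. hk a x z * (\<Sum>y\<in>{y. E z y}. hk b x y))"
    using Suc.prems reach_mono[of a L x] reach_mono[of b L x]
    by (intro sum_edges_swap[OF finite_reach]) (auto simp: hk_def dest: pn_in_reach)
  also have "\<dots> = (\<Sum>z\<in>reach x L. pn E a x z * hk (Suc b) x z)"
    by (simp add: hk_def pn.simps in_neighbours_sym mult.commute)
  also have "\<dots> = hk (a + Suc b) x x"
    using Suc.prems by (intro Suc.IH) simp
  finally show ?case by simp
qed

definition energy :: "nat list set \<Rightarrow> (nat list \<Rightarrow> real) \<Rightarrow> real" where
  "energy F h = (\<Sum>a\<in>F. \<Sum>b\<in>{b. E a b}. (h a - h b)^2)"

lemma energy_nonneg: "energy F h \<ge> 0"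
  unfolding energy_def by (intro sum_nonneg) simp

lemma energy_eq:
  fixes h :: "nat list \<Rightarrow> real"
  assumes F: "finite F" and h: "\<And>a. h a \<noteq> 0 \<Longrightarrow> a \<in> F \<and> {b. E a b} \<subseteq> F"
  shows "energy F h = 2 * (\<Sum>a\<in>F. h a * (real (deg E a) * h a - (\<Sum>b\<in>{b. E a b}. h b)))"
proof -
  let ?S = "\<lambda>a. \<Sum>b\<in>{b. E a b}. h b"
  have expand: "(\<Sum>b\<in>{b. E a b}. (h a - h b)^2)
      = real (deg E a) * (h a)^2 - 2 * (h a * ?S a) + (\<Sum>b\<in>{b. E a b}. (h b)^2)" for a
  proof -
    have "(\<Sum>b\<in>{b. E a b}. (h a - h b)^2) = (\<Sum>b\<in>{b. E a b}. (h a)^2 - 2 * (h a * h b) + (h b)^2)"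
      by (rule sum.cong) (simp_all add: power2_diff)
    then show ?thesis by (simp add: sum.distrib sum_subtractf sum_distrib_left deg_def)
  qed
  have "(\<Sum>a\<in>F. \<Sum>b\<in>{b. E b a}. (h b)^2) = (\<Sum>a\<in>F. real (deg E a) * (h a)^2)"
    using h by (intro sum_edges_target[OF F]) auto
  then have squares: "(\<Sum>a\<in>F. \<Sum>b\<in>{b. E a b}. (h b)^2) = (\<Sum>a\<in>F. real (deg E a) * (h a)^2)"
    by (simp only: in_neighbours_sym)
  have "energy F h = (\<Sum>a\<in>F. real (deg E a) * (h a)^2) - 2 * (\<Sum>a\<in>F. h a * ?S a)
      + (\<Sum>a\<in>F. \<Sum>b\<in>{b. E a b}. (h b)^2)"
    unfolding energy_def expand by (simp only: sum.distrib sum_subtractf sum_distrib_left)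
  also have "\<dots> = 2 * ((\<Sum>a\<in>F. real (deg E a) * (h a)^2) - (\<Sum>a\<in>F. h a * ?S a))"
    unfolding squares by simp
  also have "\<dots> = 2 * (\<Sum>a\<in>F. h a * (real (deg E a) * h a - ?S a))"
    by (simp add: right_diff_distrib sum_subtractf power2_eq_square ac_simps)
  finally show ?thesis .
qed

definition hk2 :: "nat \<Rightarrow> nat list \<Rightarrow> nat list \<Rightarrow> real" where
  "hk2 n x y = hk n x y + hk (Suc n) x y"

lemma deg_mult_hk:
  assumes x: "x \<in> V"
  shows "real (deg E y) * hk n x y = pn E n x y"
proof (cases "pn E n x y = 0")
  case False
  then have "y \<in> V" using walk_of_pn_nonzero walk_in_V x by blast
  then show ?thesis using deg_pos by (simp add: hk_def)
qed (simp add: hk_def)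

lemma sum_neighbours_hk: "(\<Sum>b\<in>{b. E a b}. hk n x b) = pn E (Suc n) x a"
  by (simp add: hk_def pn.simps in_neighbours_sym)

lemma energy_hk2:
  assumes x: "x \<in> V" and L: "2 * n + 4 \<le> L"
  shows "energy (reach x L) (hk2 n x) = 2 * (hk2 (2 * n) x x - hk2 (2 * n + 2) x x)"
proof -
  let ?F = "reach x L"
  have supp: "a \<in> ?F \<and> {b. E a b} \<subseteq> ?F" if "hk2 n x a \<noteq> 0" for a
  proof -
    have "pn E n x a \<noteq> 0 \<or> pn E (Suc n) x a \<noteq> 0"
      using that unfolding hk2_def hk_def by auto
    moreover have "reach x n \<subseteq> reach x (Suc n)" by (rule reach_mono) simp
    ultimately have "a \<in> reach x (Suc n)"
      using pn_in_reach by blast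
    then show ?thesis
      using L reach_edge reach_mono[of "Suc n" L x] reach_mono[of "Suc (Suc n)" L x] by fastforce
  qed
  have summand: "hk2 n x a * (real (deg E a) * hk2 n x a - (\<Sum>b\<in>{b. E a b}. hk2 n x b))
      = pn E n x a * hk2 n x a - pn E (Suc (Suc n)) x a * hk2 n x a" for a
  proof -
    have "real (deg E a) * hk2 n x a = pn E n x a + pn E (Suc n) x a"
      unfolding hk2_def distrib_left deg_mult_hk[OF x] ..
    moreover have "(\<Sum>b\<in>{b. E a b}. hk2 n x b) = pn E (Suc n) x a + pn E (Suc (Suc n)) x a"
      unfolding hk2_def sum.distrib sum_neighbours_hk ..
    ultimately show ?thesis by (simp add: algebra_simps)
  qed
  have "energy ?F (hk2 n x)
      = 2 * (\<Sum>a\<in>?F. hk2 n x a * (real (deg E a) * hk2 n x a - (\<Sum>b\<in>{b. E a b}. hk2 n x b)))"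
    by (rule energy_eq[OF finite_reach supp])
  also have "\<dots> = 2 * (\<Sum>a\<in>?F. pn E n x a * hk2 n x a - pn E (Suc (Suc n)) x a * hk2 n x a)"
    by (simp only: summand)
  also have "\<dots> = 2 * ((\<Sum>a\<in>?F. pn E n x a * hk2 n x a) - (\<Sum>a\<in>?F. pn E (Suc (Suc n)) x a * hk2 n x a))"
    by (simp only: sum_subtractf)
  also have "(\<Sum>a\<in>?F. pn E n x a * hk2 n x a) = hk (n + n) x x + hk (n + Suc n) x x"
    unfolding hk2_def distrib_left sum.distrib using L by (simp add: sum_pn_mult_hk)
  also have "\<dots> = hk2 (2 * n) x x"
    by (simp add: hk2_def mult_2)
  also have "(\<Sum>a\<in>?F. pn E (Suc (Suc n)) x a * hk2 n x a)
      = hk (Suc (Suc n) + n) x x + hk (Suc (Suc n) + Suc n) x x"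
    unfolding hk2_def distrib_left sum.distrib using L by (simp add: sum_pn_mult_hk)
  also have "\<dots> = hk2 (2 * n + 2) x x"
    by (simp add: hk2_def mult_2)
  finally show ?thesis .
qed

section \<open>Return densities\<close>

definition diag :: "nat list \<Rightarrow> nat \<Rightarrow> real" where
  "diag x j = hk2 (2 * j) x x"

lemma diag_nonneg: "diag x j \<ge> 0"
  unfolding diag_def hk2_def using hk_nonneg by (simp add: add_nonneg_nonneg)

lemma diag_Suc_le: "x \<in> V \<Longrightarrow> diag x (Suc j) \<le> diag x j"
  using energy_hk2[of x j "2 * j + 4"] energy_nonneg[of "reach x (2 * j + 4)" "hk2 j x"]
  by (simp add: diag_def)

lemma diag_antimono: "x \<in> V \<Longrightarrow> j \<le> k \<Longrightarrow> diag x k \<le> diag x j"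
  using lift_Suc_antimono_le[of "diag x"] diag_Suc_le by blast

lemma gdist_energy_bound:
  fixes h :: "nat list \<Rightarrow> real"
  assumes x: "x \<in> V" and y: "y \<in> V" and L: "gdist E x y \<le> L"
  shows "(h x - h y)^2 \<le> real (gdist E x y) * energy (reach x L) h"
proof -
  obtain p where p: "is_path E p" "distinct p" "hd p = x" "last p = y" "length p \<le> Suc (gdist E x y)"
    "set p \<subseteq> reach x (gdist E x y)"
    using walk_imp_distinct_path[OF walk_gdist[OF x y]] by blast
  let ?edges = "Sigma (reach x L) (\<lambda>a. {b. E a b})"
  have "p \<noteq> []" using p(1) by (simp add: is_path_def)
  then have "(h x - h y)^2 \<le> real (length p - 1) * (\<Sum>e\<in>set (zip p (tl p)). (h (fst e) - h (snd e))^2)"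
    using telescope_square_le[OF p(2)] p(3,4) by simp
  also have "\<dots> \<le> real (gdist E x y) * (\<Sum>e\<in>set (zip p (tl p)). (h (fst e) - h (snd e))^2)"
    using p(5) by (intro mult_right_mono sum_nonneg) auto
  also have "(\<Sum>e\<in>set (zip p (tl p)). (h (fst e) - h (snd e))^2) \<le> (\<Sum>e\<in>?edges. (h (fst e) - h (snd e))^2)"
  proof (rule sum_mono2)
    show "finite ?edges"
      using finite_reach finite_neighbours by (intro finite_SigmaI)
    show "set (zip p (tl p)) \<subseteq> ?edges"
    proof
      fix e assume e: "e \<in> set (zip p (tl p))"
      then have "fst e \<in> reach x L"
        using set_zip_leftD[of "fst e" "snd e" p "tl p"] p(6) reach_mono[OF L] by auto
      then show "e \<in> ?edges" using is_path_edge[OF p(1) e] by (cases e) auto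
    qed
  qed simp
  also have "(\<Sum>e\<in>?edges. (h (fst e) - h (snd e))^2) = energy (reach x L) h"
    unfolding energy_def using finite_reach finite_neighbours
    by (subst sum.Sigma) (auto simp: case_prod_beta)
  finally show ?thesis by (simp add: mult_left_mono)
qed

lemma ball_subset_reach: "x \<in> V \<Longrightarrow> ball V E x r \<subseteq> reach x (nat \<lceil>r\<rceil>)"
  unfolding ball_def reach_def using walk_gdist le_nat_ceiling by blast

lemma finite_ball: "x \<in> V \<Longrightarrow> finite (ball V E x r)"
  using ball_subset_reach finite_reach by (rule finite_subset)

lemma center_in_ball: "x \<in> V \<Longrightarrow> r \<ge> 0 \<Longrightarrow> x \<in> ball V E x r"
  using gdist_le_walk[OF walk0, of E x] unfolding ball_def by simp

lemma vol_nonneg: "vol V E x r \<ge> 0"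
  unfolding vol_def by (intro sum_nonneg) simp

lemma sum_ball_pn_mult_le:
  assumes x: "x \<in> V" and f: "\<And>y. f y \<ge> 0" and L: "n \<le> L"
  shows "(\<Sum>y\<in>ball V E x r. pn E n x y * f y) \<le> (\<Sum>y\<in>reach x L. pn E n x y * f y)"
proof -
  have "(\<Sum>y\<in>ball V E x r. pn E n x y * f y) \<le> (\<Sum>y\<in>ball V E x r \<union> reach x L. pn E n x y * f y)"
    using finite_ball[OF x] finite_reach pn_nonneg f by (intro sum_mono2) auto
  also have "\<dots> = (\<Sum>y\<in>reach x L. pn E n x y * f y)"
  proof (rule sum.mono_neutral_right)
    show "\<forall>y\<in>ball V E x r \<union> reach x L - reach x L. pn E n x y * f y = 0"
      using pn_in_reach reach_mono[OF L] by fastforce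
  qed (use finite_ball[OF x] finite_reach in auto)
  finally show ?thesis .
qed

lemma sum_pn_ball_le_1: "x \<in> V \<Longrightarrow> (\<Sum>y\<in>ball V E x r. pn E n x y) \<le> 1"
  using sum_ball_pn_mult_le[of x "\<lambda>_. 1" n n r] sum_pn_reach[of x n n] by simp

lemma hk2_le_in_ball:
  assumes x: "x \<in> V" and v: "vol V E x \<rho> > 0"
  shows "\<exists>y\<in>ball V E x \<rho>. hk2 n x y \<le> 2 / vol V E x \<rho>"
proof (rule ccontr)
  let ?B = "ball V E x \<rho>"
  assume "\<not> ?thesis"
  then have big: "2 / vol V E x \<rho> < hk2 n x y" if "y \<in> ?B" for y
    using that by auto
  have "?B \<noteq> {}" using v by (auto simp: vol_def)
  have "2 = (\<Sum>y\<in>?B. real (deg E y)) * (2 / vol V E x \<rho>)"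
    using v by (simp add: vol_def)
  also have "\<dots> = (\<Sum>y\<in>?B. real (deg E y) * (2 / vol V E x \<rho>))"
    by (rule sum_distrib_right)
  also have "\<dots> < (\<Sum>y\<in>?B. real (deg E y) * hk2 n x y)"
  proof (rule sum_strict_mono[OF finite_ball[OF x] \<open>?B \<noteq> {}\<close>])
    fix y assume y: "y \<in> ?B"
    then have "deg E y > 0" using deg_pos by (simp add: ball_def)
    then show "real (deg E y) * (2 / vol V E x \<rho>) < real (deg E y) * hk2 n x y"
      using big[OF y] by (intro mult_strict_left_mono) simp_all
  qed
  also have "\<dots> = (\<Sum>y\<in>?B. pn E n x y) + (\<Sum>y\<in>?B. pn E (Suc n) x y)"
    by (simp add: hk2_def distrib_left deg_mult_hk[OF x] sum.distrib)
  also have "\<dots> \<le> 2"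
    using sum_pn_ball_le_1[OF x, of n \<rho>] sum_pn_ball_le_1[OF x, of "Suc n" \<rho>] by linarith
  finally show False by simp
qed

lemma diag_le_sqrt_decrement:
  assumes x: "x \<in> V" and \<rho>: "\<rho> \<ge> 0" and v: "vol V E x \<rho> > 0"
  shows "diag x j \<le> 2 / vol V E x \<rho> + sqrt (\<rho> * (2 * (diag x (2 * j) - diag x (2 * j + 1))))"
proof -
  define D where "D = 2 * (diag x (2 * j) - diag x (2 * j + 1))"
  obtain y where y: "y \<in> ball V E x \<rho>" and hy: "hk2 (2 * j) x y \<le> 2 / vol V E x \<rho>"
    using hk2_le_in_ball[OF x v] by blast
  then have yV: "y \<in> V" and gy: "real (gdist E x y) \<le> \<rho>" by (auto simp: ball_def)
  define L where "L = 4 * j + 4 + nat \<lceil>\<rho>\<rceil>"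
  have L: "gdist E x y \<le> L" using le_nat_ceiling[OF gy] by (simp add: L_def)
  have "energy (reach x L) (hk2 (2 * j) x) = D"
    using energy_hk2[OF x, of "2 * j" L] by (simp add: L_def D_def diag_def)
  then have "(diag x j - hk2 (2 * j) x y)^2 \<le> \<rho> * D"
    using gdist_energy_bound[OF x yV L, of "hk2 (2 * j) x"] gy energy_nonneg
    by (simp add: diag_def) (meson mult_right_mono order_trans)
  then have "\<bar>diag x j - hk2 (2 * j) x y\<bar> \<le> sqrt (\<rho> * D)"
    using real_sqrt_le_mono real_sqrt_abs by metis
  then show ?thesis using hy unfolding D_def by linarith
qed

lemma diag_upper_bound:
  assumes x: "x \<in> V" and \<rho>: "\<rho> \<ge> 0" and v: "vol V E x \<rho> > 0" and m: "m \<ge> 1"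
    and n: "2 * m \<le> n"
  shows "diag x n \<le> 4 / vol V E x \<rho> + 8 * \<rho> / real m"
proof -
  obtain j where j: "m \<le> j" "j < 2 * m"
    and dec: "diag x (2 * j) - diag x (2 * j + 1) \<le> diag x (2 * m) / real m"
    using exists_decrement_le[of "diag x" m] diag_Suc_le[OF x] diag_nonneg m by auto
  have "diag x (2 * m) / real m \<le> diag x j / real m"
    using diag_antimono[OF x] j by (intro divide_right_mono) auto
  then have "\<rho> * (2 * (diag x (2 * j) - diag x (2 * j + 1))) \<le> \<rho> * (2 * (diag x j / real m))"
    using dec \<rho> by (intro mult_left_mono) auto
  also have "\<dots> = (2 * \<rho> / real m) * diag x j"
    by (simp add: field_simps)
  finally have "sqrt (\<rho> * (2 * (diag x (2 * j) - diag x (2 * j + 1)))) \<le> sqrt ((2 * \<rho> / real m) * diag x j)"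
    by (rule real_sqrt_le_mono)
  then have "diag x j \<le> 2 / vol V E x \<rho> + sqrt ((2 * \<rho> / real m) * diag x j)"
    using diag_le_sqrt_decrement[OF x \<rho> v, of j] by linarith
  then have "diag x j \<le> 2 * (2 / vol V E x \<rho>) + 4 * (2 * \<rho> / real m)"
    using v \<rho> diag_nonneg by (intro le_of_le_add_sqrt) auto
  moreover have "diag x n \<le> diag x j" using diag_antimono[OF x] j n by simp
  ultimately show ?thesis by simp
qed

section \<open>Displacement of the walk\<close>

lemma sum_pn_ball_square_le:
  assumes x: "x \<in> V"
  shows "(\<Sum>y\<in>ball V E x R. pn E n x y)^2 \<le> vol V E x R * diag x n"
proof -
  let ?B = "ball V E x R"
  let ?d = "\<lambda>y. sqrt (real (deg E y))"
  have "(\<Sum>y\<in>?B. pn E n x y) = (\<Sum>y\<in>?B. ?d y * (pn E n x y / ?d y))"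
    using deg_pos by (intro sum.cong) (auto simp: ball_def)
  then have "(\<Sum>y\<in>?B. pn E n x y)^2 \<le> (\<Sum>y\<in>?B. (?d y)^2) * (\<Sum>y\<in>?B. (pn E n x y / ?d y)^2)"
    using Cauchy_Schwarz_ineq_sum by metis
  also have "(\<Sum>y\<in>?B. (?d y)^2) = vol V E x R"
    by (simp add: vol_def)
  also have "(\<Sum>y\<in>?B. (pn E n x y / ?d y)^2) = (\<Sum>y\<in>?B. pn E n x y * hk n x y)"
    by (simp add: hk_def power_divide power2_eq_square)
  also have "\<dots> \<le> (\<Sum>y\<in>reach x (n + n). pn E n x y * hk n x y)"
    using hk_nonneg by (intro sum_ball_pn_mult_le[OF x]) auto
  also have "\<dots> = hk (n + n) x x"
    by (rule sum_pn_mult_hk) simp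
  also have "\<dots> \<le> diag x n"
    using hk_nonneg by (simp add: diag_def hk2_def mult_2)
  finally show ?thesis
    using vol_nonneg by (simp add: mult_left_mono)
qed

lemma reach_subset_ball: "x \<in> V \<Longrightarrow> reach x n \<subseteq> ball V E x (real n)"
  unfolding reach_def ball_def using walk_in_V gdist_le_walk by fastforce

lemma sum_pn_ball_eq_1: "x \<in> V \<Longrightarrow> (\<Sum>y\<in>ball V E x (real n). pn E n x y) = 1"
  using sum_pn_reach[of x n n] reach_subset_ball[of x n] finite_ball pn_in_reach
  by (metis (no_types, lifting) DiffE order_refl sum.mono_neutral_left)

definition mean_dist :: "nat list \<Rightarrow> nat \<Rightarrow> real" where
  "mean_dist x n = (\<Sum>y\<in>ball V E x (real n). pn E n x y * real (gdist E x y))"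

lemma exp_dist_eq_suminf: "exp_dist V E x t = (\<Sum>n. poisson t n * mean_dist x n)"
  by (simp add: exp_dist_def poisson_def mean_dist_def)

lemma mean_dist_nonneg: "mean_dist x n \<ge> 0"
  unfolding mean_dist_def using pn_nonneg by (intro sum_nonneg) simp

lemma mean_dist_le: "x \<in> V \<Longrightarrow> mean_dist x n \<le> real n"
proof -
  assume x: "x \<in> V"
  have "mean_dist x n \<le> (\<Sum>y\<in>ball V E x (real n). pn E n x y * real n)"
    unfolding mean_dist_def using pn_nonneg by (intro sum_mono mult_left_mono) (auto simp: ball_def)
  also have "\<dots> = real n"
    using sum_pn_ball_eq_1[OF x] by (simp flip: sum_distrib_right)
  finally show ?thesis .
qed

lemma mean_dist_ge:
  assumes x: "x \<in> V" and R: "R \<ge> 0"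
  shows "R * (1 - (\<Sum>y\<in>ball V E x R. pn E n x y)) \<le> mean_dist x n"
proof -
  let ?Bn = "ball V E x (real n)" and ?BR = "ball V E x R"
  have "R * (1 - (\<Sum>y\<in>?BR. pn E n x y)) \<le> R * (1 - (\<Sum>y\<in>?Bn \<inter> ?BR. pn E n x y))"
    using finite_ball[OF x] pn_nonneg R by (intro mult_left_mono diff_left_mono sum_mono2) auto
  also have "\<dots> = R * (\<Sum>y\<in>?Bn - ?BR. pn E n x y)"
  proof -
    have "?Bn - ?BR = ?Bn - (?Bn \<inter> ?BR)" by blast
    then show ?thesis
      using finite_ball[OF x] sum_pn_ball_eq_1[OF x, of n] by (simp add: sum_diff)
  qed
  also have "\<dots> \<le> (\<Sum>y\<in>?Bn - ?BR. pn E n x y * real (gdist E x y))"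
    unfolding sum_distrib_left
  proof (intro sum_mono)
    fix y assume "y \<in> ?Bn - ?BR"
    then have "R \<le> real (gdist E x y)" by (auto simp: ball_def)
    then show "R * pn E n x y \<le> pn E n x y * real (gdist E x y)"
      using pn_nonneg[of E n x y] by (metis mult.commute mult_right_mono)
  qed
  also have "\<dots> \<le> mean_dist x n"
    unfolding mean_dist_def using finite_ball[OF x] pn_nonneg by (intro sum_mono2) auto
  finally show ?thesis .
qed

lemma mean_dist_ge_half:
  assumes x: "x \<in> V" and R: "R \<ge> 0" and small: "vol V E x R * diag x n \<le> 1 / 4"
  shows "R / 2 \<le> mean_dist x n"
proof -
  define P where "P = (\<Sum>y\<in>ball V E x R. pn E n x y)"
  have "P^2 \<le> (1 / 2)^2"
    using sum_pn_ball_square_le[OF x, of n R] small by (simp add: P_def power2_eq_square)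
  then have "P \<le> 1 / 2"
    by (rule power2_le_imp_le) simp
  then have "R * (1 / 2) \<le> R * (1 - P)"
    using R by (intro mult_left_mono) auto
  also have "\<dots> \<le> mean_dist x n"
    unfolding P_def by (rule mean_dist_ge[OF x R])
  finally show ?thesis by simp
qed

lemma exp_dist_ge_quarter:
  assumes x: "x \<in> V" and R: "R \<ge> 0" and far: "\<And>n. k \<le> n \<Longrightarrow> R / 2 \<le> mean_dist x n"
    and t: "t \<ge> 2 * (real k + 1)"
  shows "R / 4 \<le> exp_dist V E x t"
proof -
  define g where "g n = R / 2 * poisson t n - (if n \<in> {..<k} then R / 2 * poisson t n else 0)" for n
  have "g sums (R / 2 * 1 - (\<Sum>n\<in>{..<k}. R / 2 * poisson t n))"
    unfolding g_def by (intro sums_diff sums_mult poisson_sums sums_If_finite_set) simp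
  then have g: "g sums (R / 2 - R / 2 * (\<Sum>n<k. poisson t n))"
    by (simp add: sum_distrib_left)
  have "R / 2 * (\<Sum>n<k. poisson t n) \<le> R / 2 * (1 / 2)"
    using sum_poisson_lessThan_le_half[OF t] R by (intro mult_left_mono) auto
  have "t \<ge> 0" using t by simp
  then have "R / 4 \<le> suminf g"
    using sums_unique[OF g] \<open>R / 2 * (\<Sum>n<k. poisson t n) \<le> R / 2 * (1 / 2)\<close> by simp
  also have "\<dots> \<le> (\<Sum>n. poisson t n * mean_dist x n)"
  proof (rule suminf_le)
    show "g n \<le> poisson t n * mean_dist x n" for n
    proof (cases "k \<le> n")
      case True
      then have "poisson t n * (R / 2) \<le> poisson t n * mean_dist x n"
        using far \<open>t \<ge> 0\<close> poisson_nonneg by (intro mult_left_mono) auto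
      then show ?thesis using True by (simp add: g_def mult.commute)
    next
      case False
      then show ?thesis
        using \<open>t \<ge> 0\<close> poisson_nonneg mean_dist_nonneg by (simp add: g_def)
    qed
    show "summable g" using g by (rule sums_summable)
    show "summable (\<lambda>n. poisson t n * mean_dist x n)"
      using \<open>t \<ge> 0\<close> mean_dist_nonneg mean_dist_le[OF x] by (rule summable_poisson_mult)
  qed
  finally show ?thesis by (simp add: exp_dist_eq_suminf)
qed

lemma one_le_vol: "x \<in> V \<Longrightarrow> R \<ge> 0 \<Longrightarrow> 1 \<le> vol V E x R"
proof -
  assume x: "x \<in> V" and R: "R \<ge> 0"
  have "1 \<le> real (deg E x)" using deg_pos[OF x] by simp
  also have "\<dots> \<le> vol V E x R"
    unfolding vol_def using center_in_ball[OF x R] finite_ball[OF x] by (intro member_le_sum) auto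
  finally show ?thesis .
qed

section \<open>Good balls\<close>

lemma vol_bound_imp_power_le_square:
  assumes x: "x \<in> V" and r: "r > 0" and lam: "lam > 0"
    and inner: "vol V E x (r / lam^5) \<le> (r / lam^5)^2 * lam"
  shows "lam^9 \<le> r^2"
proof -
  have "1 \<le> (r / lam^5)^2 * lam"
    using one_le_vol[OF x, of "r / lam^5"] inner r lam by simp
  also have "\<dots> = r^2 / lam^9"
    using lam by (simp add: power_divide field_simps eval_nat_numeral)
  finally show ?thesis using lam by (simp add: le_divide_eq)
qed

lemma vol_mult_diag_le_quarter:
  assumes x: "x \<in> V" and r: "r > 0" and lam: "lam \<ge> 64"
    and inner: "vol V E x (r / lam^5) \<le> (r / lam^5)^2 * lam"
    and outer: "r^2 / lam^6 \<le> vol V E x (r / lam^2)"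
    and m: "r^3 / lam^9 \<le> real m" "m \<ge> 1" and n: "2 * m \<le> n"
  shows "vol V E x (r / lam^5) * diag x n \<le> 1 / 4"
proof -
  let ?\<rho> = "r / lam^2"
  have lam0: "lam > 0" using lam by simp
  have pos: "0 < r^2 / lam^6" "0 < r^3 / lam^9" using r lam0 by simp_all
  have "vol V E x (r / lam^5) * diag x n
      \<le> (r / lam^5)^2 * lam * (4 / vol V E x ?\<rho> + 8 * ?\<rho> / real m)"
    using inner diag_upper_bound[OF x _ _ m(2) n, of ?\<rho>] vol_nonneg diag_nonneg outer pos r lam0
    by (intro mult_mono) auto
  also have "\<dots> \<le> (r / lam^5)^2 * lam * (4 / (r^2 / lam^6) + 8 * ?\<rho> / (r^3 / lam^9))"
  proof (intro mult_left_mono add_mono)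
    show "4 / vol V E x ?\<rho> \<le> 4 / (r^2 / lam^6)"
      using outer pos by (intro frac_le) auto
    show "8 * ?\<rho> / real m \<le> 8 * ?\<rho> / (r^3 / lam^9)"
      using m(1) pos r lam0 by (intro frac_le) auto
  qed (use lam0 in simp)
  also have "\<dots> = 4 / lam^3 + 8 / lam^2"
    using r lam0 by (simp add: power_divide field_simps eval_nat_numeral)
  also have "\<dots> \<le> 4 / 64^3 + 8 / 64^2"
    using lam by (intro add_mono divide_left_mono power_mono) auto
  finally show ?thesis by simp
qed

lemma exp_dist_ge_scaled:
  assumes x: "x \<in> V" and r: "r > 0" and lam: "lam \<ge> 64"
    and inner: "vol V E x (r / lam^5) \<le> (r / lam^5)^2 * lam"
    and outer: "r^2 / lam^6 \<le> vol V E x (r / lam^2)"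
    and t: "r^3 / lam^6 \<le> t"
  shows "r / lam^5 / 4 \<le> exp_dist V E x t"
proof -
  define q where "q = r^3 / lam^9"
  define m where "m = nat \<lceil>q\<rceil>"
  have lam0: "lam > 0" using lam by simp
  have "lam^9 \<le> r^2" by (rule vol_bound_imp_power_le_square[OF x r lam0 inner])
  moreover have "1 \<le> lam^9" using lam by simp
  ultimately have "1 \<le> r" using r power2_le_imp_le[of 1 r] by simp
  then have "r^2 \<le> r^3" by (simp add: power_increasing)
  then have q: "1 \<le> q" using \<open>lam^9 \<le> r^2\<close> lam0 by (simp add: q_def le_divide_eq)
  then have m: "q \<le> real m" "real m \<le> q + 1" "m \<ge> 1"
    unfolding m_def by linarith+
  have "2 * (real (2 * m) + 1) \<le> 10 * q" using m q by simp
  also have "\<dots> \<le> lam^3 * q"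
    using q lam power_mono[of 64 lam 3] by (intro mult_right_mono) auto
  also have "\<dots> = r^3 / lam^6"
    using lam0 by (simp add: q_def field_simps eval_nat_numeral)
  finally have "2 * (real (2 * m) + 1) \<le> t" using t by simp
  moreover have "r / lam^5 / 2 \<le> mean_dist x n" if "2 * m \<le> n" for n
    using r lam0 vol_mult_diag_le_quarter[OF x r lam inner outer _ m(3) that] m(1)
    by (intro mean_dist_ge_half[OF x]) (auto simp: q_def)
  ultimately show ?thesis
    using r lam0 by (intro exp_dist_ge_quarter[OF x, of _ "2 * m"]) auto
qed

end

section \<open>Subgraphs of the tree\<close>

lemma subgraph_of_tree_connected_locally_finite:
  assumes sub: "subgraph_of_tree n0 V E" and inf: "infinite V" and conn: "connected_graph V E"
  shows "connected_locally_finite_graph V E"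
proof
  show "E x y \<Longrightarrow> E y x" "E x y \<Longrightarrow> x \<in> V" for x y
    using sub unfolding subgraph_of_tree_def by blast+
  show "finite {y. E x y}" for x
  proof (rule finite_subset)
    show "{y. E x y} \<subseteq> (\<lambda>i. x @ [i]) ` {..<n0} \<union> {butlast x}"
    proof
      fix y assume "y \<in> {y. E x y}"
      then have "(\<exists>i<n0. y = x @ [i]) \<or> (\<exists>i<n0. x = y @ [i])"
        using sub unfolding subgraph_of_tree_def tree_adj_def by blast
      then show "y \<in> (\<lambda>i. x @ [i]) ` {..<n0} \<union> {butlast x}" by auto
    qed
  qed simp
  show "\<exists>y. E x y" if x: "x \<in> V" for x
  proof -
    obtain v where v: "v \<in> V" "v \<noteq> x"
      using inf by (metis finite.emptyI finite_insert insert_iff subsetI finite_subset)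
    then obtain k where "walk E k x v"
      using conn x unfolding connected_graph_def by blast
    then show ?thesis using v(2) by (cases rule: walk.cases) auto
  qed
  show "connected_graph V E" by (fact conn)
qed

theorem corollary4p8:
  fixes n0 :: nat and V :: "nat list set" and E :: "nat list \<Rightarrow> nat list \<Rightarrow> bool"
  assumes "n0 \<ge> 2"
    and "subgraph_of_tree n0 V E"
    and "infinite V"
    and "connected_graph V E"
  shows "\<exists>c1>0. \<forall>x r lam t. x \<in> V \<longrightarrow> r \<ge> 1 \<longrightarrow> lam \<ge> 64
            \<longrightarrow> good_ball V E x r lam \<longrightarrow> good_ball V E x (r / lam ^ 5) lam
            \<longrightarrow> r ^ 3 / lam ^ 6 \<le> t \<longrightarrow> t \<le> r ^ 3 / lam ^ 5
            \<longrightarrow> exp_dist V E x t \<ge> c1 / lam ^ 12 * t powr (1 / 3)"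
proof -
  interpret connected_locally_finite_graph V E
    using subgraph_of_tree_connected_locally_finite assms(2-4) .
  have "1 / 4 / lam^12 * t powr (1 / 3) \<le> exp_dist V E x t"
    if x: "x \<in> V" and r: "r \<ge> 1" and lam: "lam \<ge> 64"
      and outer: "good_ball V E x r lam" and inner: "good_ball V E x (r / lam^5) lam"
      and t: "r^3 / lam^6 \<le> t" "t \<le> r^3 / lam^5"
    for x r lam t
  proof -
    have "0 \<le> t" using t(1) r lam by (smt (verit) divide_nonneg_nonneg zero_le_power)
    then have "t powr (1 / 3) / lam^12 / 4 \<le> r / lam^5 / 4"
      using cube_root_div_le[of r lam t] r lam t(2) by simp
    also have "\<dots> \<le> exp_dist V E x t"
      using outer inner unfolding good_ball_def
      by (intro exp_dist_ge_scaled[OF x _ lam _ _ t(1)]) (use r in auto)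
    finally show ?thesis by simp
  qed
  then show ?thesis by (intro exI[of _ "1 / 4"]) auto
qed

end
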